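(* Let $C$ be a coalgebra over a field $\Bbbk$ and $C^*$ its dual (convolution) algebra. Every left annihilator in $C^*$, i.e. every set of the form $I=\{f\in C^*\mid f\cdot h=0\ \forall h\in H\}$ for some subset $H\subseteq C^*$, is closed in the finite topology of $C^*$.
   Context: For a coalgebra $C$, $C^*$ is an algebra with convolution product $(f\cdot h)(c)=\sum f(c_1)h(c_2)$ (Sweedler notation). For a subspace $X\subseteq C$ let $X^\perp=\{f\in C^*\mid f(X)=0\}$, and for $Y\subseteq C^*$ let $Y^\perp=\{c\in C\mid f(c)=0\ \forall f\in Y\}$. The finite topology on $C^*$ is the topology whose closed subspaces are those $W\subseteq C^*$ with $W=W^{\perp\perp}$, equivalently those of the form $X^\perp$ for a subspace $X\subseteq C$. *)

theory Defs
  imports Complex_Main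
begin

definition dual_space :: "('k::field \<Rightarrow> 'c::ab_group_add \<Rightarrow> 'c) \<Rightarrow> ('c \<Rightarrow> 'k) set" where
  "dual_space sc = {f. Vector_Spaces.linear sc ((*) :: 'k \<Rightarrow> 'k \<Rightarrow> 'k) f}"

definition bilin :: "('k::field \<Rightarrow> 'c::ab_group_add \<Rightarrow> 'c) \<Rightarrow> ('c \<Rightarrow> 'c \<Rightarrow> 'k) \<Rightarrow> bool" where
  "bilin sc b \<longleftrightarrow> (\<forall>x. Vector_Spaces.linear sc (*) (b x)) \<and> (\<forall>y. Vector_Spaces.linear sc (*) (\<lambda>x. b x y))"

definition trilin :: "('k::field \<Rightarrow> 'c::ab_group_add \<Rightarrow> 'c) \<Rightarrow> ('c \<Rightarrow> 'c \<Rightarrow> 'c \<Rightarrow> 'k) \<Rightarrow> bool" where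
  "trilin sc t \<longleftrightarrow> (\<forall>x y. Vector_Spaces.linear sc (*) (t x y)) \<and>
     (\<forall>x z. Vector_Spaces.linear sc (*) (\<lambda>y. t x y z)) \<and>
     (\<forall>y z. Vector_Spaces.linear sc (*) (\<lambda>x. t x y z))"

text \<open>Comultiplication in Sweedler form: delta c is a finite list of pairs (c1,c2)
representing the tensor \<Sum> c1 \<otimes> c2 in C \<otimes> C.  Since elements of finite tensor
products over a field are separated by multilinear forms, linearity and coassociativity of
the comultiplication are expressed by evaluating against all bi-/trilinear forms.\<close>

definition sw2 :: "('c \<Rightarrow> ('c \<times> 'c) list) \<Rightarrow> ('c \<Rightarrow> 'c \<Rightarrow> 'k::field) \<Rightarrow> 'c \<Rightarrow> 'k" where
  "sw2 delta b c = sum_list (map (\<lambda>(x, y). b x y) (delta c))"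

definition coalgebra ::
  "('k::field \<Rightarrow> 'c::ab_group_add \<Rightarrow> 'c) \<Rightarrow> ('c \<Rightarrow> ('c \<times> 'c) list) \<Rightarrow> ('c \<Rightarrow> 'k) \<Rightarrow> bool" where
  "coalgebra sc delta eps \<longleftrightarrow>
     vector_space sc \<and>
     Vector_Spaces.linear sc (*) eps \<and>
     (\<forall>b. bilin sc b \<longrightarrow> Vector_Spaces.linear sc (*) (sw2 delta b)) \<and>
     (\<forall>t. trilin sc t \<longrightarrow>
        (\<forall>c. sw2 delta (\<lambda>x y. sw2 delta (\<lambda>u v. t u v y) x) c
           = sw2 delta (\<lambda>x y. sw2 delta (\<lambda>u v. t x u v) y) c)) \<and>
     (\<forall>c. sum_list (map (\<lambda>(x, y). sc (eps x) y) (delta c)) = c) \<and>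
     (\<forall>c. sum_list (map (\<lambda>(x, y). sc (eps y) x) (delta c)) = c)"

definition conv :: "('c \<Rightarrow> ('c \<times> 'c) list) \<Rightarrow> ('c \<Rightarrow> 'k::field) \<Rightarrow> ('c \<Rightarrow> 'k) \<Rightarrow> 'c \<Rightarrow> 'k" where
  "conv delta f h = sw2 delta (\<lambda>x y. f x * h y)"

definition perp_C :: "('c \<Rightarrow> 'k::field) set \<Rightarrow> 'c set" where
  "perp_C Y = {c. \<forall>f\<in>Y. f c = 0}"

definition perp_dual :: "('k::field \<Rightarrow> 'c::ab_group_add \<Rightarrow> 'c) \<Rightarrow> 'c set \<Rightarrow> ('c \<Rightarrow> 'k) set" where
  "perp_dual sc X = {f \<in> dual_space sc. \<forall>x\<in>X. f x = 0}"

definition finite_top_closed :: "('k::field \<Rightarrow> 'c::ab_group_add \<Rightarrow> 'c) \<Rightarrow> ('c \<Rightarrow> 'k) set \<Rightarrow> bool" where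
  "finite_top_closed sc W \<longleftrightarrow> W = perp_dual sc (perp_C W)"

end

theory Submission
  imports Defs
begin

text \<open>For a linear functional f, (f \<cdot> h)(c) = \<Sum> f(c1) h(c2) = f(\<Sum> h(c2) c1) = f(h \<rightharpoonup> c).
  Hence f annihilates every h \<in> H from the left iff f vanishes on all elements h \<rightharpoonup> c,
  so the left annihilator is X^\<perp> for X = {h \<rightharpoonup> c | h \<in> H}, and every X^\<perp> is closed.\<close>

lemma linear_sum_list:
  assumes "Vector_Spaces.linear s1 s2 f"
  shows "f (sum_list xs) = sum_list (map f xs)"
proof -
  interpret module_hom s1 s2 f
    using assms by (rule linear_iff_module_hom[THEN iffD1])
  show ?thesis by (induction xs) (simp_all add: add)
qed

definition hit ::
  "('k::field \<Rightarrow> 'c::ab_group_add \<Rightarrow> 'c) \<Rightarrow> ('c \<Rightarrow> ('c \<times> 'c) list) \<Rightarrow> ('c \<Rightarrow> 'k) \<Rightarrow> 'c \<Rightarrow> 'c"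
  where "hit sc delta h c = sum_list (map (\<lambda>(x, y). sc (h y) x) (delta c))"

lemma conv_eq_apply_hit:
  assumes "f \<in> dual_space sc"
  shows "conv delta f h c = f (hit sc delta h c)"
proof -
  interpret module_hom sc "(*)" f
    using assms by (simp add: dual_space_def linear_iff_module_hom)
  show ?thesis
    using assms
    by (simp add: dual_space_def conv_def sw2_def hit_def linear_sum_list o_def split_def scale
        mult.commute)
qed

lemma finite_top_closed_perp_dual: "finite_top_closed sc (perp_dual sc X)"
  unfolding finite_top_closed_def perp_dual_def perp_C_def by blast

lemma left_annihilator_eq_perp_dual_hit:
  "{f \<in> dual_space sc. \<forall>h\<in>H. conv delta f h = (\<lambda>c. 0)}
     = perp_dual sc {hit sc delta h c | h c. h \<in> H}"
  unfolding perp_dual_def by (auto simp: conv_eq_apply_hit fun_eq_iff) blast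

theorem proposition3p1:
  fixes sc :: "'k::field \<Rightarrow> 'c::ab_group_add \<Rightarrow> 'c"
    and delta :: "'c \<Rightarrow> ('c \<times> 'c) list"
    and eps :: "'c \<Rightarrow> 'k"
    and H :: "('c \<Rightarrow> 'k) set"
  assumes "coalgebra sc delta eps"
    and "H \<subseteq> dual_space sc"
  shows "finite_top_closed sc {f \<in> dual_space sc. \<forall>h\<in>H. conv delta f h = (\<lambda>c. 0)}"
  unfolding left_annihilator_eq_perp_dual_hit by (rule finite_top_closed_perp_dual)

end
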